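(* Let $\Delta'\ge 3$ be an integer and let $G\in\mathcal{G}_{\Delta'}$. For $i\in\{1,\dots,\Delta'\}$ define $$d_i=\frac{1}{i+1}+(i-1)!\Big(\frac{1}{e}-\sum_{j=0}^{i+1}\frac{(-1)^j}{j!}\Big)\ \text{ if $i$ is even},\qquad d_i=\frac{1}{i+1}+(i-1)!\Big(\sum_{j=0}^{i+1}\frac{(-1)^j}{j!}-\frac{1}{e}\Big)\ \text{ if $i$ is odd},$$ where $e$ is Euler's number. Then $$\alpha(G)\ge \sum_{i=1}^{\Delta'} d_i|V_i(G)|.$$ Moreover, $d_1=1-\frac{1}{e}$ and $d_{i+1}=1-id_i$ for $i=1,\dots,\Delta'-1$.
   Context: All graphs are simple, finite and undirected. For an integer $D\ge 3$, $\mathcal{G}_{D}$ denotes the set of connected graphs $G\neq K_{D+1}$ with maximum degree $D$. For a graph $G$ and $i\ge 1$, $V_i(G)$ is the set of vertices of $G$ of degree $i$. $\alpha(G)$ is the independence number of $G$. *)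

theory Defs
  imports Complex_Main
begin

definition simple_graph :: "'a set \<Rightarrow> ('a \<Rightarrow> 'a \<Rightarrow> bool) \<Rightarrow> bool" where
  "simple_graph V E \<longleftrightarrow> finite V \<and> (\<forall>x y. E x y \<longrightarrow> x \<in> V \<and> y \<in> V)
     \<and> (\<forall>x y. E x y \<longrightarrow> E y x) \<and> (\<forall>x. \<not> E x x)"

definition neighbours :: "'a set \<Rightarrow> ('a \<Rightarrow> 'a \<Rightarrow> bool) \<Rightarrow> 'a \<Rightarrow> 'a set" where
  "neighbours V E v = {u \<in> V. E v u}"

definition degree :: "'a set \<Rightarrow> ('a \<Rightarrow> 'a \<Rightarrow> bool) \<Rightarrow> 'a \<Rightarrow> nat" where
  "degree V E v = card (neighbours V E v)"

definition connected_graph :: "'a set \<Rightarrow> ('a \<Rightarrow> 'a \<Rightarrow> bool) \<Rightarrow> bool" where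
  "connected_graph V E \<longleftrightarrow> V \<noteq> {} \<and>
     (\<forall>u\<in>V. \<forall>v\<in>V. (u, v) \<in> {(x, y). E x y}\<^sup>*)"

definition max_degree_is :: "'a set \<Rightarrow> ('a \<Rightarrow> 'a \<Rightarrow> bool) \<Rightarrow> nat \<Rightarrow> bool" where
  "max_degree_is V E D \<longleftrightarrow> (\<forall>v\<in>V. degree V E v \<le> D) \<and> (\<exists>v\<in>V. degree V E v = D)"

definition is_complete_graph :: "'a set \<Rightarrow> ('a \<Rightarrow> 'a \<Rightarrow> bool) \<Rightarrow> nat \<Rightarrow> bool" where
  "is_complete_graph V E n \<longleftrightarrow> card V = n \<and> (\<forall>x\<in>V. \<forall>y\<in>V. x \<noteq> y \<longrightarrow> E x y)"

definition in_GD :: "nat \<Rightarrow> 'a set \<Rightarrow> ('a \<Rightarrow> 'a \<Rightarrow> bool) \<Rightarrow> bool" where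
  "in_GD D V E \<longleftrightarrow> simple_graph V E \<and> connected_graph V E \<and> max_degree_is V E D
     \<and> \<not> is_complete_graph V E (D + 1)"

definition vertices_of_degree :: "'a set \<Rightarrow> ('a \<Rightarrow> 'a \<Rightarrow> bool) \<Rightarrow> nat \<Rightarrow> 'a set" where
  "vertices_of_degree V E i = {v \<in> V. degree V E v = i}"

definition independent_set :: "'a set \<Rightarrow> ('a \<Rightarrow> 'a \<Rightarrow> bool) \<Rightarrow> 'a set \<Rightarrow> bool" where
  "independent_set V E S \<longleftrightarrow> S \<subseteq> V \<and> (\<forall>x\<in>S. \<forall>y\<in>S. \<not> E x y)"

definition independence_number :: "'a set \<Rightarrow> ('a \<Rightarrow> 'a \<Rightarrow> bool) \<Rightarrow> nat" where
  "independence_number V E = Max {card S | S. independent_set V E S}"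

definition d_coef :: "nat \<Rightarrow> real" where
  "d_coef i = (if even i
     then 1 / real (i + 1) + fact (i - 1) * (1 / exp 1 - (\<Sum>j = 0..i + 1. (-1) ^ j / fact j))
     else 1 / real (i + 1) + fact (i - 1) * ((\<Sum>j = 0..i + 1. (-1) ^ j / fact j) - 1 / exp 1))"

end

theory Submission
  imports Defs
begin

text \<open>
  Give each vertex v of an induced subgraph G[W] the weight 1/(deg v + 1) if its component
  in G[W] is complete, and d_(deg v) otherwise; by induction on |W|, G[W] has an independent
  set at least as large as its total weight. If some closed neighbourhood N[u] has weight at
  most 1, take u and recurse on W - N[u]: deleting vertices never lowers a weight, because d
  is decreasing with d_i > 1/(i+1) and a clique carries weight at most 1 (a clique vertex of
  degree at least r = |K| leaves at most d_r + (r-1) d_(r-1) = 1). Otherwise no vertex is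
  simplicial, and deleting a vertex v of maximum degree k loses d_k, while each of its k
  neighbours gains at least d_(k-1) - d_k by convexity of d; since d_k <= k (d_(k-1) - d_k)
  this is no loss. All properties of d used follow from the recurrence d_(i+1) = 1 - i d_i and
  the bound d_i >= 1/(i+1) + 1/(i(i+1)(i+3)), which comes from the alternating tail of the
  series of 1/e. In a connected graph other than K_(D+1) no component is complete, so the total
  weight of G is the sum of the d_i |V_i|.
\<close>

section \<open>The coefficients d_i\<close>

definition exp_neg_one_remainder :: "nat \<Rightarrow> real" where
  "exp_neg_one_remainder n = exp (-1) - (\<Sum>j = 0..n. (-1) ^ j / fact j)"

lemma d_coef_eq_remainder:
  "d_coef i = 1 / real (i + 1) + fact (i - 1) * (-1) ^ i * exp_neg_one_remainder (i + 1)"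
  unfolding d_coef_def exp_neg_one_remainder_def by (auto simp: exp_minus field_simps)

lemma exp_neg_one_remainder_sums:
  "(\<lambda>i. (-1) ^ i / fact (i + Suc n)) sums ((-1) ^ Suc n * exp_neg_one_remainder n)"
proof -
  have "(\<lambda>j. (-1) ^ j / fact j :: real) sums exp (-1)"
    using exp_converges[of "-1::real"] by (simp add: divide_inverse mult.commute)
  then have "(\<lambda>i. (-1) ^ (i + Suc n) / fact (i + Suc n) :: real) sums exp_neg_one_remainder n"
    unfolding exp_neg_one_remainder_def atLeast0AtMost lessThan_Suc_atMost[symmetric]
    by (subst sums_iff_shift) simp
  from sums_mult[OF this, of "(-1) ^ Suc n"] show ?thesis
    by (simp add: power_add mult_ac)
qed

lemma exp_neg_one_remainder_lower:
  "1 / fact (n + 1) - 1 / fact (n + 2) \<le> (-1) ^ Suc n * exp_neg_one_remainder n"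
proof -
  define a :: "nat \<Rightarrow> real" where "a = (\<lambda>i. 1 / fact (i + Suc n))"
  have "summable a"
    using summable_ignore_initial_segment[OF summable_exp[of "1::real"], of "Suc n"]
    by (simp add: a_def divide_inverse del: fact_Suc)
  then have "a \<longlonglongrightarrow> 0" by (rule summable_LIMSEQ_zero)
  moreover have "0 \<le> a i" and "a (Suc i) \<le> a i" for i
    unfolding a_def by (auto intro: divide_left_mono fact_mono)
  ultimately have "(\<Sum>i<2 * 1. (-1) ^ i * a i) \<le> (\<Sum>i. (-1) ^ i * a i)"
    by (rule summable_Leibniz'(2))
  also have "\<dots> = (-1) ^ Suc n * exp_neg_one_remainder n"
    using sums_unique[OF exp_neg_one_remainder_sums[of n]] by (simp add: a_def)
  finally show ?thesis by (simp add: a_def numeral_2_eq_2)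
qed

lemma d_coef_1: "d_coef 1 = 1 - 1 / exp 1"
  unfolding d_coef_def by simp

lemma d_coef_Suc:
  assumes "1 \<le> i"
  shows "d_coef (i + 1) = 1 - real i * d_coef i"
proof -
  obtain m where i: "i = Suc m" using assms by (cases i) auto
  define x where "x = fact m * (-1) ^ Suc m * exp_neg_one_remainder (m + 2)"
  have R: "exp_neg_one_remainder (m + 3) = exp_neg_one_remainder (m + 2) - (-1) ^ (m + 3) / fact (m + 3)"
    unfolding exp_neg_one_remainder_def by (simp add: numeral_3_eq_3)
  have F: "fact (Suc m) / fact (m + 3) = (1 :: real) / ((real m + 2) * (real m + 3))"
  proof -
    have "(fact (m + 3) :: real) = (real m + 2) * (real m + 3) * fact (Suc m)"
      by (simp add: numeral_3_eq_3 algebra_simps)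
    then show ?thesis by simp
  qed
  have "fact (Suc m) * (-1) ^ (m + 2) * exp_neg_one_remainder (m + 3)
      = fact (Suc m) * (-1) ^ m * exp_neg_one_remainder (m + 2) + fact (Suc m) / fact (m + 3)"
    unfolding R by (simp add: algebra_simps power_add minus_one_mult_self del: fact_Suc)
  also have "\<dots> = 1 / ((real m + 2) * (real m + 3)) - (real m + 1) * x"
    unfolding F x_def by (simp add: algebra_simps)
  finally have "fact (Suc m) * (-1) ^ (m + 2) * exp_neg_one_remainder (m + 3)
      = 1 / ((real m + 2) * (real m + 3)) - (real m + 1) * x" .
  moreover have "d_coef (i + 1)
      = 1 / (real m + 3) + fact (Suc m) * (-1) ^ (m + 2) * exp_neg_one_remainder (m + 3)"
    using d_coef_eq_remainder[of "m + 2"] by (simp add: i numeral_3_eq_3 add_ac del: fact_Suc)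
  moreover have "1 / (real m + 3) + 1 / ((real m + 2) * (real m + 3)) = 1 / (real m + 2)"
    by (simp add: divide_simps)
  ultimately have "d_coef (i + 1) = 1 / (real m + 2) - (real m + 1) * x"
    by simp
  moreover have "d_coef i = 1 / (real m + 2) + x"
    unfolding i d_coef_eq_remainder x_def by (simp add: numeral_2_eq_2)
  moreover have "1 - (real m + 1) / (real m + 2) = 1 / (real m + 2)"
    by (simp add: divide_simps)
  ultimately show ?thesis
    unfolding i by (simp add: algebra_simps)
qed

lemma d_coef_lower_bound:
  assumes "1 \<le> j"
  shows "1 / (real j + 1) + 1 / (real j * (real j + 1) * (real j + 3)) \<le> d_coef j"
proof -
  obtain m where j: "j = Suc m" using assms by (cases j) auto
  have f3: "(fact (m + 3) :: real) = (real m + 1) * (real m + 2) * (real m + 3) * fact m"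
    by (simp add: numeral_3_eq_3 algebra_simps)
  have f4: "(fact (m + 4) :: real) = (real m + 4) * fact (m + 3)"
    by (simp add: numeral_3_eq_3 eval_nat_numeral algebra_simps)
  have "fact m * (1 / fact (m + 3) - 1 / fact (m + 4))
      = 1 / ((real m + 1) * (real m + 2) * (real m + 4))"
    unfolding f4 f3 by (simp add: divide_simps)
  also have "\<dots> = 1 / (real j * (real j + 1) * (real j + 3))"
    by (simp add: j algebra_simps)
  finally have tail: "fact (j - 1) * (1 / fact (j + 2) - 1 / fact (j + 3))
      = 1 / (real j * (real j + 1) * (real j + 3))"
    by (simp add: j numeral_3_eq_3 eval_nat_numeral del: fact_Suc)
  have "fact (j - 1) * (1 / fact (j + 2) - 1 / fact (j + 3))
      \<le> fact (j - 1) * ((-1) ^ j * exp_neg_one_remainder (j + 1))"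
    using exp_neg_one_remainder_lower[of "j + 1"]
    by (intro mult_left_mono) (simp_all add: numeral_2_eq_2 numeral_3_eq_3 del: fact_Suc)
  then show ?thesis
    unfolding tail d_coef_eq_remainder by (simp add: mult.assoc add.commute)
qed

lemma d_coef_gt_inverse:
  assumes "1 \<le> j"
  shows "1 / (real j + 1) < d_coef j"
proof -
  have "0 < 1 / (real j * (real j + 1) * (real j + 3))"
    using assms by simp
  then show ?thesis
    using d_coef_lower_bound[OF assms] by linarith
qed

lemma d_coef_Suc_mult_le:
  assumes "1 \<le> j"
  shows "(real j + 2) * d_coef (j + 1) \<le> (real j + 1) * d_coef j"
proof -
  define t where "t = real j"
  have t: "0 < t" using assms by (simp add: t_def)
  \<comment> \<open>since (t^2 + 3t + 1)^2 = t (t + 1) (t + 2) (t + 3) + 1\<close>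
  have "t + 2 \<le> (t\<^sup>2 + 3 * t + 1) * (1 / (t + 1) + 1 / (t * (t + 1) * (t + 3)))"
    using t by (simp add: divide_simps power2_eq_square) (simp add: algebra_simps)
  also have "\<dots> \<le> (t\<^sup>2 + 3 * t + 1) * d_coef j"
    using d_coef_lower_bound[OF assms] t by (intro mult_left_mono) (simp_all add: t_def)
  finally show ?thesis
    unfolding d_coef_Suc[OF assms] by (simp add: t_def algebra_simps power2_eq_square)
qed

lemma d_coef_Suc_le:
  assumes "1 \<le> j"
  shows "d_coef (j + 1) \<le> d_coef j"
proof -
  have "1 < (real j + 1) * d_coef j"
    using d_coef_gt_inverse[OF assms] by (simp add: divide_less_eq add.commute mult.commute)
  then show ?thesis
    unfolding d_coef_Suc[OF assms] by (simp add: algebra_simps)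
qed

lemma d_coef_antimono:
  assumes "1 \<le> i" "i \<le> j"
  shows "d_coef j \<le> d_coef i"
  using assms(2)
proof (induction j rule: dec_induct)
  case (step j)
  then show ?case using d_coef_Suc_le[of j] assms(1) by simp
qed simp

lemma d_coef_le_1:
  assumes "1 \<le> j"
  shows "d_coef j \<le> 1"
proof -
  have "d_coef j \<le> d_coef 1"
    using d_coef_antimono[OF order_refl assms] .
  moreover have "0 < 1 / exp (1 :: real)"
    by simp
  ultimately show ?thesis
    unfolding d_coef_1 by linarith
qed

lemma d_coef_diff_antimono:
  assumes "2 \<le> i" "i \<le> j"
  shows "d_coef (j - 1) - d_coef j \<le> d_coef (i - 1) - d_coef i"
  using assms(2)
proof (induction j rule: dec_induct)
  case (step j)
  obtain m where j: "j = m + 1" and m: "1 \<le> m"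
    using assms(1) step.hyps(1) by (cases j) auto
  have "(real m + 2) * d_coef (m + 1) \<le> (real m + 1) * d_coef m"
    by (rule d_coef_Suc_mult_le[OF m])
  then have "d_coef (m + 1) - d_coef (m + 2) \<le> d_coef m - d_coef (m + 1)"
    using d_coef_Suc[OF m] d_coef_Suc[of "m + 1"] by (simp add: algebra_simps)
  then show ?case
    using step.IH by (simp add: j)
qed simp

lemma d_coef_le_mult_diff:
  assumes "2 \<le> k"
  shows "d_coef k \<le> real k * (d_coef (k - 1) - d_coef k)"
  using d_coef_Suc_mult_le[of "k - 1"] assms by (simp add: of_nat_diff algebra_simps)

section \<open>Weights and independent sets of induced subgraphs\<close>

lemma sum_eq_sum_block_averages:
  fixes f :: "'a \<Rightarrow> real" and B :: "'a \<Rightarrow> 'a set"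
  assumes "finite A"
    and self: "\<And>w. w \<in> A \<Longrightarrow> w \<in> B w"
    and sub: "\<And>w. w \<in> A \<Longrightarrow> B w \<subseteq> A"
    and block: "\<And>w u. w \<in> A \<Longrightarrow> u \<in> B w \<Longrightarrow> B u = B w"
  shows "(\<Sum>w\<in>A. f w) = (\<Sum>w\<in>A. (\<Sum>u\<in>B w. f u) / real (card (B w)))"
proof -
  have blocks_containing: "{w \<in> A. u \<in> B w} = B u" if u: "u \<in> A" for u
  proof (intro subsetI equalityI)
    fix w assume "w \<in> {w \<in> A. u \<in> B w}"
    then have "w \<in> A" "B u = B w" using block by auto
    then show "w \<in> B u" using self by simp
  next
    fix w assume w: "w \<in> B u"
    then have "B w = B u" using block[OF u] by simp
    then show "w \<in> {w \<in> A. u \<in> B w}" using w self[OF u] sub[OF u] by auto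
  qed
  have "(\<Sum>w\<in>A. (\<Sum>u\<in>B w. f u) / real (card (B w)))
      = (\<Sum>w\<in>A. \<Sum>u\<in>{u \<in> A. u \<in> B w}. f u / real (card (B u)))"
  proof (rule sum.cong[OF refl])
    fix w assume w: "w \<in> A"
    have "{u \<in> A. u \<in> B w} = B w" using sub[OF w] by blast
    moreover have "(\<Sum>u\<in>B w. f u / real (card (B w))) = (\<Sum>u\<in>B w. f u / real (card (B u)))"
      using block[OF w] by (intro sum.cong) simp_all
    ultimately show "(\<Sum>u\<in>B w. f u) / real (card (B w)) = (\<Sum>u\<in>{u \<in> A. u \<in> B w}. f u / real (card (B u)))"
      by (simp add: sum_divide_distrib)
  qed
  also have "\<dots> = (\<Sum>u\<in>A. \<Sum>w\<in>{w \<in> A. u \<in> B w}. f u / real (card (B u)))"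
    by (rule sum.swap_restrict[OF \<open>finite A\<close> \<open>finite A\<close>])
  also have "\<dots> = (\<Sum>u\<in>A. f u)"
  proof (rule sum.cong[OF refl])
    fix u assume u: "u \<in> A"
    have "finite (B u)" using finite_subset[OF sub[OF u] \<open>finite A\<close>] .
    then have "card (B u) \<noteq> 0" using self[OF u] by auto
    then show "(\<Sum>w\<in>{w \<in> A. u \<in> B w}. f u / real (card (B u))) = f u"
      unfolding blocks_containing[OF u] by simp
  qed
  finally show ?thesis by simp
qed

lemma card_le_independence_number:
  assumes "finite V" "independent_set V E S"
  shows "card S \<le> independence_number V E"
proof -
  have "{card S | S. independent_set V E S} \<subseteq> card ` Pow V"
    unfolding independent_set_def by auto
  then have "finite {card S | S. independent_set V E S}"
    using \<open>finite V\<close> by (simp add: finite_subset)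
  then show ?thesis
    unfolding independence_number_def using assms(2) by (intro Max_ge) auto
qed

lemma independent_set_mono:
  assumes "independent_set W' E S" "W' \<subseteq> W"
  shows "independent_set W E S"
  using assms unfolding independent_set_def by blast

lemma sum_mult_card_fibres:
  fixes f :: "'b \<Rightarrow> real"
  assumes "finite V" "finite I" "g ` V \<subseteq> I"
  shows "(\<Sum>i\<in>I. f i * real (card {v \<in> V. g v = i})) = (\<Sum>v\<in>V. f (g v))"
proof -
  have "(\<Sum>i\<in>I. f i * real (card {v \<in> V. g v = i})) = (\<Sum>i\<in>I. \<Sum>v\<in>{v \<in> V. g v = i}. f (g v))"
    by (intro sum.cong) (auto simp: mult.commute)
  also have "\<dots> = (\<Sum>v\<in>V. f (g v))"
    using sum.group[OF assms] .
  finally show ?thesis .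
qed

locale adjacency =
  fixes E :: "'a \<Rightarrow> 'a \<Rightarrow> bool"
  assumes adj_sym: "E x y \<Longrightarrow> E y x"
    and adj_irrefl: "\<not> E x x"
begin

definition closed_nbhd :: "'a set \<Rightarrow> 'a \<Rightarrow> 'a set" where
  "closed_nbhd W v = insert v (neighbours W E v)"

definition clique :: "'a set \<Rightarrow> bool" where
  "clique K \<longleftrightarrow> (\<forall>u\<in>K. \<forall>w\<in>K. u \<noteq> w \<longrightarrow> E u w)"

text \<open>The component of v in G[W] is complete (and then equals closed_nbhd W v).\<close>

definition in_complete_component :: "'a set \<Rightarrow> 'a \<Rightarrow> bool" where
  "in_complete_component W v \<longleftrightarrow> (\<forall>u\<in>neighbours W E v. closed_nbhd W u = closed_nbhd W v)"

definition weight :: "'a set \<Rightarrow> 'a \<Rightarrow> real" where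
  "weight W v = (if in_complete_component W v then 1 / (real (degree W E v) + 1)
                 else d_coef (degree W E v))"

definition total_weight :: "'a set \<Rightarrow> real" where
  "total_weight W = (\<Sum>v\<in>W. weight W v)"

lemma neighbours_subset: "neighbours W E v \<subseteq> W"
  unfolding neighbours_def by auto

lemma closed_nbhd_subset: "v \<in> W \<Longrightarrow> closed_nbhd W v \<subseteq> W"
  unfolding closed_nbhd_def using neighbours_subset by auto

lemma card_closed_nbhd:
  assumes "finite W"
  shows "card (closed_nbhd W v) = degree W E v + 1"
proof -
  have "v \<notin> neighbours W E v" unfolding neighbours_def using adj_irrefl by auto
  then show ?thesis
    unfolding closed_nbhd_def degree_def
    using finite_subset[OF neighbours_subset assms] by simp
qed

lemma in_complete_component_closed_nbhd:
  assumes "in_complete_component W v" "u \<in> closed_nbhd W v"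
  shows "in_complete_component W u" and "closed_nbhd W u = closed_nbhd W v"
proof -
  show same: "closed_nbhd W u = closed_nbhd W v"
    using assms unfolding in_complete_component_def closed_nbhd_def by auto
  show "in_complete_component W u"
    unfolding in_complete_component_def
  proof
    fix t assume "t \<in> neighbours W E u"
    then have "t = v \<or> t \<in> neighbours W E v"
      using same unfolding closed_nbhd_def by auto
    then show "closed_nbhd W t = closed_nbhd W u"
      using assms(1) same unfolding in_complete_component_def by auto
  qed
qed

lemma clique_closed_nbhd:
  assumes "in_complete_component W v"
  shows "clique (closed_nbhd W v)"
  unfolding clique_def
proof (intro ballI impI)
  fix u w assume u: "u \<in> closed_nbhd W v" and w: "w \<in> closed_nbhd W v" and "u \<noteq> w"
  have "w \<in> closed_nbhd W u"
    using in_complete_component_closed_nbhd(2)[OF assms u] w by simp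
  with \<open>u \<noteq> w\<close> show "E u w"
    unfolding closed_nbhd_def neighbours_def by auto
qed

lemma weight_in_complete_component:
  assumes "finite W" "in_complete_component W v"
  shows "weight W v = 1 / real (card (closed_nbhd W v))"
  using assms card_closed_nbhd[OF assms(1)] unfolding weight_def by simp

lemma degree_ge_1_if_not_in_complete_component:
  assumes "finite W" "\<not> in_complete_component W v"
  shows "1 \<le> degree W E v"
proof -
  have "neighbours W E v \<noteq> {}"
    using assms(2) unfolding in_complete_component_def by auto
  then show ?thesis
    unfolding degree_def using finite_subset[OF neighbours_subset assms(1)]
    by (simp add: Suc_le_eq card_gt_0_iff)
qed

lemma degree_mono:
  assumes "finite W" "W' \<subseteq> W"
  shows "degree W' E v \<le> degree W E v"
  unfolding degree_def using assms
  by (intro card_mono) (auto simp: neighbours_def intro: finite_subset)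

lemma clique_has_vertex_of_large_degree:
  assumes fin: "finite W" and KW: "K \<subseteq> W" and "K \<noteq> {}" and cl: "clique K"
    and not_cc: "\<forall>t\<in>K. \<not> in_complete_component W t"
  shows "\<exists>u\<in>K. card K \<le> degree W E u"
proof (rule ccontr)
  assume "\<not> ?thesis"
  then have small: "degree W E u < card K" if "u \<in> K" for u
    using that by auto
  have finK: "finite K" using finite_subset[OF KW fin] .
  have nbhd: "neighbours W E u = K - {u}" if u: "u \<in> K" for u
  proof (rule card_seteq[symmetric])
    show "finite (neighbours W E u)" using finite_subset[OF neighbours_subset fin] .
    show "K - {u} \<subseteq> neighbours W E u"
      using cl KW u unfolding clique_def neighbours_def by auto
    show "card (neighbours W E u) \<le> card (K - {u})"
      using small[OF u] finK u unfolding degree_def by simp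
  qed
  then have "closed_nbhd W u = K" if "u \<in> K" for u
    using that unfolding closed_nbhd_def by auto
  then have "in_complete_component W u" if "u \<in> K" for u
    using that nbhd unfolding in_complete_component_def by auto
  then show False
    using not_cc \<open>K \<noteq> {}\<close> by blast
qed

lemma clique_sum_d_coef_le_1:
  assumes fin: "finite W" and KW: "K \<subseteq> W" and cl: "clique K"
    and not_cc: "\<forall>t\<in>K. \<not> in_complete_component W t"
  shows "(\<Sum>t\<in>K. d_coef (degree W E t)) \<le> 1"
proof (cases "K = {}")
  case False
  define r where "r = card K"
  have finK: "finite K" using finite_subset[OF KW fin] .
  obtain u where u: "u \<in> K" "r \<le> degree W E u"
    using clique_has_vertex_of_large_degree[OF fin KW False cl not_cc] unfolding r_def by blast
  have r: "1 \<le> r" using u(1) finK unfolding r_def by (auto simp: Suc_le_eq card_gt_0_iff)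
  have others: "d_coef (degree W E t) \<le> d_coef (r - 1)" if t: "t \<in> K - {u}" for t
  proof (rule d_coef_antimono)
    have "K - {t} \<subseteq> neighbours W E t"
      using cl KW t unfolding clique_def neighbours_def by auto
    then have "card (K - {t}) \<le> degree W E t"
      unfolding degree_def by (rule card_mono[OF finite_subset[OF neighbours_subset fin]])
    then show "r - 1 \<le> degree W E t"
      using t finK unfolding r_def by simp
    have "{t, u} \<subseteq> K" using t u by auto
    then have "2 \<le> r" using t finK unfolding r_def by (metis card_2_iff card_mono Diff_iff singletonI)
    then show "1 \<le> r - 1" by simp
  qed
  have "(\<Sum>t\<in>K. d_coef (degree W E t)) = d_coef (degree W E u) + (\<Sum>t\<in>K - {u}. d_coef (degree W E t))"
    using u(1) finK by (simp add: sum.remove)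
  also have "\<dots> \<le> d_coef r + (\<Sum>t\<in>K - {u}. d_coef (r - 1))"
    using d_coef_antimono[OF r u(2)] others by (intro add_mono sum_mono) auto
  also have "\<dots> = d_coef r + real (r - 1) * d_coef (r - 1)"
    using u(1) finK unfolding r_def by simp
  also have "\<dots> \<le> 1"
  proof (cases "r = 1")
    case True
    then show ?thesis using d_coef_le_1[of 1] by simp
  next
    case False
    then show ?thesis using d_coef_Suc[of "r - 1"] r by simp
  qed
  finally show ?thesis .
qed simp

lemma clique_sum_weight_le_1:
  assumes fin: "finite W" and KW: "K \<subseteq> W" and cl: "clique K"
  shows "(\<Sum>t\<in>K. weight W t) \<le> 1"
proof (cases "\<exists>u\<in>K. in_complete_component W u")
  case True
  then obtain u where u: "u \<in> K" "in_complete_component W u" by blast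
  define C where "C = closed_nbhd W u"
  have KC: "K \<subseteq> C"
    using cl u(1) KW unfolding C_def closed_nbhd_def clique_def neighbours_def by auto
  have "weight W t = 1 / real (card C)" if "t \<in> K" for t
    using in_complete_component_closed_nbhd[OF u(2)] weight_in_complete_component[OF fin] KC that
    unfolding C_def by auto
  then have "(\<Sum>t\<in>K. weight W t) = real (card K) / real (card C)"
    by simp
  also have "\<dots> \<le> 1"
  proof -
    have "finite C" unfolding C_def using finite_subset[OF closed_nbhd_subset fin] u(1) KW by blast
    then have "0 < card C" "card K \<le> card C"
      using card_mono[OF _ KC] u(1) KC by (auto simp: card_gt_0_iff)
    then show ?thesis by simp
  qed
  finally show ?thesis .
next
  case False
  then have "(\<Sum>t\<in>K. weight W t) = (\<Sum>t\<in>K. d_coef (degree W E t))"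
    unfolding weight_def by simp
  also have "\<dots> \<le> 1"
    using clique_sum_d_coef_le_1[OF fin KW cl] False by blast
  finally show ?thesis .
qed

lemma weight_le_weight_subset:
  assumes fin: "finite W" and sub: "W' \<subseteq> W" and not_cc: "\<not> in_complete_component W' w"
  shows "weight W w \<le> weight W' w"
proof -
  have deg': "1 \<le> degree W' E w"
    using degree_ge_1_if_not_in_complete_component[OF finite_subset[OF sub fin] not_cc] .
  have deg: "degree W' E w \<le> degree W E w"
    using degree_mono[OF fin sub] .
  have "weight W w \<le> d_coef (degree W E w)"
    using d_coef_gt_inverse[of "degree W E w"] deg' deg unfolding weight_def by auto
  also have "\<dots> \<le> d_coef (degree W' E w)"
    using d_coef_antimono[OF deg' deg] .
  finally show ?thesis
    using not_cc unfolding weight_def by simp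
qed

lemma sum_weight_le_total_weight_subset:
  assumes fin: "finite W" and sub: "W' \<subseteq> W"
  shows "(\<Sum>w\<in>W'. weight W w) \<le> total_weight W'"
proof -
  have fin': "finite W'" using finite_subset[OF sub fin] .
  define A where "A = {w \<in> W'. in_complete_component W' w}"
  have finA: "finite A" using fin' unfolding A_def by simp
  have "(\<Sum>w\<in>A. weight W w) = (\<Sum>w\<in>A. (\<Sum>u\<in>closed_nbhd W' w. weight W u) / real (card (closed_nbhd W' w)))"
  proof (rule sum_eq_sum_block_averages[OF finA])
    fix w assume "w \<in> A"
    then have w: "w \<in> W'" "in_complete_component W' w" unfolding A_def by auto
    show "w \<in> closed_nbhd W' w" unfolding closed_nbhd_def by simp
    show "closed_nbhd W' w \<subseteq> A"
      using in_complete_component_closed_nbhd(1)[OF w(2)] closed_nbhd_subset[OF w(1)]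
      unfolding A_def by auto
    show "closed_nbhd W' u = closed_nbhd W' w" if "u \<in> closed_nbhd W' w" for u
      using in_complete_component_closed_nbhd(2)[OF w(2) that] .
  qed
  also have "\<dots> \<le> (\<Sum>w\<in>A. 1 / real (card (closed_nbhd W' w)))"
  proof (intro sum_mono divide_right_mono)
    fix w assume "w \<in> A"
    then have w: "w \<in> W'" "in_complete_component W' w" unfolding A_def by auto
    show "(\<Sum>u\<in>closed_nbhd W' w. weight W u) \<le> 1"
      using clique_sum_weight_le_1[OF fin _ clique_closed_nbhd[OF w(2)]] closed_nbhd_subset[OF w(1)] sub
      by blast
  qed simp
  also have "\<dots> = (\<Sum>w\<in>A. weight W' w)"
    using weight_in_complete_component[OF fin'] unfolding A_def by simp
  finally have on_A: "(\<Sum>w\<in>A. weight W w) \<le> (\<Sum>w\<in>A. weight W' w)" .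
  have on_rest: "(\<Sum>w\<in>W' - A. weight W w) \<le> (\<Sum>w\<in>W' - A. weight W' w)"
    using weight_le_weight_subset[OF fin sub] unfolding A_def by (intro sum_mono) auto
  have "A \<subseteq> W'" unfolding A_def by auto
  then show ?thesis
    using on_A on_rest fin' unfolding total_weight_def by (simp add: sum.subset_diff[of A W'])
qed

lemma total_weight_le_remove_closed_nbhd:
  assumes fin: "finite W" and u: "u \<in> W"
  shows "total_weight W \<le> (\<Sum>t\<in>closed_nbhd W u. weight W t) + total_weight (W - closed_nbhd W u)"
proof -
  have "total_weight W = (\<Sum>t\<in>closed_nbhd W u. weight W t) + (\<Sum>t\<in>W - closed_nbhd W u. weight W t)"
    unfolding total_weight_def using sum.subset_diff[OF closed_nbhd_subset[OF u] fin] by (simp add: add.commute)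
  then show ?thesis
    using sum_weight_le_total_weight_subset[OF fin, of "W - closed_nbhd W u"] by auto
qed

lemma neighbours_remove: "neighbours (W - {v}) E u = neighbours W E u - {v}"
  unfolding neighbours_def by auto

lemma not_in_complete_component_remove:
  assumes no_simplicial: "\<forall>t\<in>W. \<not> clique (closed_nbhd W t)"
    and v: "v \<in> W" and u: "u \<in> W - {v}"
  shows "\<not> in_complete_component (W - {v}) u"
proof
  assume cc: "in_complete_component (W - {v}) u"
  define K where "K = closed_nbhd (W - {v}) u"
  have cl: "clique K" unfolding K_def using clique_closed_nbhd[OF cc] .
  show False
  proof (cases "\<forall>t\<in>K. E t v")
    case True
    then have "v \<in> neighbours W E u"
      using v unfolding K_def closed_nbhd_def neighbours_def by (auto intro: adj_sym)
    then have "closed_nbhd W u = insert v K"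
      unfolding K_def closed_nbhd_def neighbours_remove by auto
    moreover have "clique (insert v K)"
      using cl True adj_sym unfolding clique_def by (metis insert_iff)
    ultimately show False
      using no_simplicial u by auto
  next
    case False
    then obtain t where t: "t \<in> K" "\<not> E t v" by blast
    have "closed_nbhd (W - {v}) t = K"
      using in_complete_component_closed_nbhd(2)[OF cc] t(1) unfolding K_def by blast
    moreover have "neighbours W E t = neighbours (W - {v}) E t"
      unfolding neighbours_remove using t(2) unfolding neighbours_def by auto
    ultimately have "closed_nbhd W t = K"
      unfolding closed_nbhd_def by simp
    moreover have "t \<in> W"
      using t(1) closed_nbhd_subset[of u "W - {v}"] u unfolding K_def by auto
    ultimately show False
      using no_simplicial cl by auto
  qed
qed

lemma degree_remove:
  assumes fin: "finite W" and v: "v \<in> W" and "u \<noteq> v"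
  shows "degree (W - {v}) E u = (if E u v then degree W E u - 1 else degree W E u)"
proof -
  have "v \<in> neighbours W E u \<longleftrightarrow> E u v"
    using v unfolding neighbours_def by simp
  then show ?thesis
    unfolding degree_def neighbours_remove
    using finite_subset[OF neighbours_subset fin] by auto
qed

lemma total_weight_eq_sum_d_coef:
  assumes "\<forall>v\<in>W. \<not> in_complete_component W v"
  shows "total_weight W = (\<Sum>v\<in>W. d_coef (degree W E v))"
  unfolding total_weight_def weight_def using assms by simp

lemma sum_d_coef_degree_remove:
  assumes fin: "finite W" and v: "v \<in> W"
  shows "(\<Sum>u\<in>W - {v}. d_coef (degree (W - {v}) E u)) - (\<Sum>u\<in>W - {v}. d_coef (degree W E u))
    = (\<Sum>u\<in>neighbours W E v. d_coef (degree W E u - 1) - d_coef (degree W E u))"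
proof -
  have N: "neighbours W E v \<subseteq> W - {v}"
    using adj_irrefl unfolding neighbours_def by auto
  have adj: "E u v \<longleftrightarrow> u \<in> neighbours W E v" if "u \<in> W" for u
    using that adj_sym unfolding neighbours_def by blast
  have "(\<Sum>u\<in>W - {v}. d_coef (degree (W - {v}) E u)) - (\<Sum>u\<in>W - {v}. d_coef (degree W E u))
      = (\<Sum>u\<in>W - {v}. d_coef (degree (W - {v}) E u) - d_coef (degree W E u))"
    by (simp add: sum_subtractf)
  also have "\<dots> = (\<Sum>u\<in>neighbours W E v. d_coef (degree (W - {v}) E u) - d_coef (degree W E u))"
    using fin N degree_remove[OF fin v] adj by (intro sum.mono_neutral_right) auto
  also have "\<dots> = (\<Sum>u\<in>neighbours W E v. d_coef (degree W E u - 1) - d_coef (degree W E u))"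
  proof (rule sum.cong[OF refl])
    fix u assume "u \<in> neighbours W E v"
    then have "u \<in> W" "u \<noteq> v" "E u v" using N adj by auto
    then show "d_coef (degree (W - {v}) E u) - d_coef (degree W E u)
        = d_coef (degree W E u - 1) - d_coef (degree W E u)"
      using degree_remove[OF fin v, of u] by simp
  qed
  finally show ?thesis .
qed

lemma degree_ge_2_if_neighbour:
  assumes fin: "finite W" and v: "v \<in> W" and u: "u \<in> neighbours W E v"
    and not_cc: "\<not> in_complete_component (W - {v}) u"
  shows "2 \<le> degree W E u"
proof -
  have "u \<noteq> v" "E u v"
    using u adj_irrefl unfolding neighbours_def by (auto dest: adj_sym)
  then have "degree (W - {v}) E u = degree W E u - 1"
    using degree_remove[OF fin v] by simp
  moreover have "1 \<le> degree (W - {v}) E u"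
    using degree_ge_1_if_not_in_complete_component[OF _ not_cc] fin by simp
  ultimately show ?thesis by simp
qed

lemma total_weight_le_remove_max_degree:
  assumes fin: "finite W" and no_simplicial: "\<forall>t\<in>W. \<not> clique (closed_nbhd W t)"
    and v: "v \<in> W" and max: "\<forall>u\<in>W. degree W E u \<le> degree W E v"
  shows "total_weight W \<le> total_weight (W - {v})"
proof -
  define k where "k = degree W E v"
  define N where "N = neighbours W E v"
  have not_cc: "\<forall>t\<in>W. \<not> in_complete_component W t"
    using no_simplicial clique_closed_nbhd by blast
  have not_cc': "\<forall>t\<in>W - {v}. \<not> in_complete_component (W - {v}) t"
    using not_in_complete_component_remove[OF no_simplicial v] by blast
  have N: "N \<subseteq> W - {v}"
    using adj_irrefl unfolding N_def neighbours_def by auto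
  have deg2: "2 \<le> degree W E u" and deg_le: "degree W E u \<le> k" if "u \<in> N" for u
    using that N degree_ge_2_if_neighbour[OF fin v, of u] not_cc' max
    unfolding N_def k_def by auto
  then have gain: "d_coef (k - 1) - d_coef k \<le> d_coef (degree W E u - 1) - d_coef (degree W E u)"
    if "u \<in> N" for u
    using d_coef_diff_antimono that by blast
  obtain u where "u \<in> N"
    using no_simplicial v unfolding N_def closed_nbhd_def clique_def by auto
  then have k: "2 \<le> k"
    using deg2 deg_le order_trans by blast
  have "d_coef k \<le> real (card N) * (d_coef (k - 1) - d_coef k)"
    using d_coef_le_mult_diff[OF k] unfolding N_def k_def degree_def by simp
  also have "\<dots> \<le> (\<Sum>u\<in>N. d_coef (degree W E u - 1) - d_coef (degree W E u))"
    using sum_mono[of N _ "\<lambda>u. d_coef (degree W E u - 1) - d_coef (degree W E u)", OF gain] by simp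
  also have "\<dots> = total_weight (W - {v}) - (total_weight W - d_coef k)"
    unfolding total_weight_eq_sum_d_coef[OF not_cc] total_weight_eq_sum_d_coef[OF not_cc']
      N_def k_def sum_d_coef_degree_remove[OF fin v, symmetric]
    using fin v by (simp add: sum.remove)
  finally show ?thesis by simp
qed

lemma independent_set_insert_closed_nbhd:
  assumes "u \<in> W" "independent_set (W - closed_nbhd W u) E S"
  shows "independent_set W E (insert u S)"
proof -
  have "\<not> E u x" "\<not> E x u" if "x \<in> S" for x
    using that assms(2) unfolding independent_set_def closed_nbhd_def neighbours_def
    by (auto dest: adj_sym)
  then show ?thesis
    using assms adj_irrefl unfolding independent_set_def by auto
qed

lemma independent_set_ge_total_weight:
  assumes "finite W"
  shows "\<exists>S. independent_set W E S \<and> total_weight W \<le> real (card S)"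
  using assms
proof (induction "card W" arbitrary: W rule: less_induct)
  case less
  note fin = less.prems
  have IH: "\<exists>S. independent_set W' E S \<and> total_weight W' \<le> real (card S)" if "W' \<subset> W" for W'
    using less.hyps[OF psubset_card_mono[OF fin that]] finite_subset[OF _ fin] that by blast
  consider (empty) "W = {}"
    | (light) u where "u \<in> W" "(\<Sum>t\<in>closed_nbhd W u. weight W t) \<le> 1"
    | (heavy) "W \<noteq> {}" "\<forall>u\<in>W. 1 < (\<Sum>t\<in>closed_nbhd W u. weight W t)"
    using not_le by blast
  then show ?case
  proof cases
    case empty
    then have "independent_set W E {}" "total_weight W \<le> real (card {})"
      unfolding independent_set_def total_weight_def by simp_all
    then show ?thesis by blast
  next
    case light
    define C where "C = closed_nbhd W u"
    have "u \<in> C" unfolding C_def closed_nbhd_def by simp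
    then obtain S where S: "independent_set (W - C) E S" "total_weight (W - C) \<le> real (card S)"
      using IH[of "W - C"] light(1) by blast
    have "u \<notin> S" "finite S"
      using S(1) \<open>u \<in> C\<close> fin unfolding independent_set_def by (auto intro: finite_subset)
    then have "total_weight W \<le> real (card (insert u S))"
      using total_weight_le_remove_closed_nbhd[OF fin light(1)] light(2) S(2)
      unfolding C_def by simp
    then show ?thesis
      using independent_set_insert_closed_nbhd[OF light(1)] S(1) unfolding C_def by blast
  next
    case heavy
    have no_simplicial: "\<forall>t\<in>W. \<not> clique (closed_nbhd W t)"
    proof (intro ballI notI)
      fix t assume "t \<in> W" "clique (closed_nbhd W t)"
      then have "(\<Sum>s\<in>closed_nbhd W t. weight W s) \<le> 1"
        using clique_sum_weight_le_1[OF fin closed_nbhd_subset] by blast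
      then show False
        using heavy(2) \<open>t \<in> W\<close> by fastforce
    qed
    have "Max (degree W E ` W) \<in> degree W E ` W"
      using fin heavy(1) by simp
    then obtain v where v: "v \<in> W" "degree W E v = Max (degree W E ` W)"
      by auto
    then have max: "\<forall>u\<in>W. degree W E u \<le> degree W E v"
      using fin by simp
    obtain S where S: "independent_set (W - {v}) E S" "total_weight (W - {v}) \<le> real (card S)"
      using IH[of "W - {v}"] v(1) by blast
    then have "independent_set W E S" "total_weight W \<le> real (card S)"
      using independent_set_mono[OF S(1)] total_weight_le_remove_max_degree[OF fin no_simplicial v(1) max]
      by auto
    then show ?thesis by blast
  qed
qed

lemma closed_nbhd_eq_if_connected:
  assumes conn: "connected_graph V E" and EV: "\<And>x y. E x y \<Longrightarrow> y \<in> V"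
    and v: "v \<in> V" and cc: "in_complete_component V v"
  shows "closed_nbhd V v = V"
proof -
  have "u \<in> closed_nbhd V v" if "(v, u) \<in> {(x, y). E x y}\<^sup>*" for u
    using that
  proof (induction rule: rtrancl_induct)
    case base
    then show ?case unfolding closed_nbhd_def by simp
  next
    case (step y z)
    then have "z \<in> closed_nbhd V y"
      using EV unfolding closed_nbhd_def neighbours_def by auto
    then show ?case
      using in_complete_component_closed_nbhd(2)[OF cc step.IH] by simp
  qed
  moreover have "(v, u) \<in> {(x, y). E x y}\<^sup>*" if "u \<in> V" for u
    using conn v that unfolding connected_graph_def by blast
  ultimately show ?thesis
    using closed_nbhd_subset[OF v] by blast
qed

lemma not_in_complete_component_if_in_GD:
  assumes G: "in_GD D V E" and v: "v \<in> V"
  shows "\<not> in_complete_component V v"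
proof
  assume cc: "in_complete_component V v"
  have "closed_nbhd V v = V"
    using G v cc closed_nbhd_eq_if_connected unfolding in_GD_def simple_graph_def by blast
  moreover obtain w where w: "w \<in> V" "degree V E w = D"
    using G unfolding in_GD_def max_degree_is_def by blast
  ultimately have "closed_nbhd V w = V"
    using in_complete_component_closed_nbhd(2)[OF cc] by simp
  then have "card V = D + 1"
    using card_closed_nbhd[of V w] G w(2) unfolding in_GD_def simple_graph_def by simp
  moreover have "clique V"
    using clique_closed_nbhd[OF cc] \<open>closed_nbhd V v = V\<close> by simp
  ultimately have "is_complete_graph V E (D + 1)"
    unfolding is_complete_graph_def clique_def by blast
  then show False
    using G unfolding in_GD_def by blast
qed

end

theorem theorem5:
  fixes D :: nat and V :: "'a set" and E :: "'a \<Rightarrow> 'a \<Rightarrow> bool"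
  assumes "D \<ge> 3"
    and "in_GD D V E"
  shows "real (independence_number V E)
           \<ge> (\<Sum>i = 1..D. d_coef i * real (card (vertices_of_degree V E i)))
         \<and> d_coef 1 = 1 - 1 / exp 1
         \<and> (\<forall>i\<in>{1..D - 1}. d_coef (i + 1) = 1 - real i * d_coef i)"
proof -
  have G: "simple_graph V E" "max_degree_is V E D"
    using assms(2) unfolding in_GD_def by auto
  then have fin: "finite V"
    unfolding simple_graph_def by blast
  interpret adjacency E
    using G(1) unfolding simple_graph_def by unfold_locales blast+
  have not_cc: "\<forall>v\<in>V. \<not> in_complete_component V v"
    using not_in_complete_component_if_in_GD[OF assms(2)] by blast
  obtain S where S: "independent_set V E S" "total_weight V \<le> real (card S)"
    using independent_set_ge_total_weight[OF fin] by blast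
  have "degree V E ` V \<subseteq> {1..D}"
    using degree_ge_1_if_not_in_complete_component[OF fin] not_cc G(2)
    unfolding max_degree_is_def by auto
  then have "(\<Sum>i = 1..D. d_coef i * real (card (vertices_of_degree V E i))) = total_weight V"
    unfolding vertices_of_degree_def total_weight_eq_sum_d_coef[OF not_cc]
    by (intro sum_mult_card_fibres[OF fin]) simp_all
  also have "\<dots> \<le> real (independence_number V E)"
    using S card_le_independence_number[OF fin] by (meson of_nat_le_iff order_trans)
  finally show ?thesis
    using d_coef_1 d_coef_Suc by auto
qed

end
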